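(* For every $n\ge 0$, $L(C_n)=B_n$, where the Bernoulli numbers are defined by $\sum_{n\ge0}B_n\frac{x^n}{n!}=\frac{x}{e^x-1}$. Equivalently, with $L_\sigma:=L\circ A_\sigma^{-1}$, $L_\sigma(C_n)=B_n/n!$.
   Context: Let $k$ be a field of characteristic $0$. Rooted trees are finite and non-planar; $\bullet$ is the one-vertex tree. $\mathcal H$ is the free commutative $k$-algebra generated by isomorphism classes of rooted trees with at least one edge, with unit identified with $\bullet$. A subforest of a rooted tree $t$ is either $\bullet$ or a nonempty set of pairwise vertex-disjoint subtrees each with at least one edge, identified with the product of its components; $t/s$ is the tree obtained by contracting each component of $s$ to a vertex. $\mathcal H$ is a Hopf algebra with multiplicative coproduct $\Delta(t)=\sum_s s\otimes t/s$ over subforests (as subsets), antipode $S$, convolution $f\star g=(f\otimes g)\circ\Delta$. The tree factorial: $\bullet!=1$, $B_+(t_1\cdots t_n)!=v(B_+(t_1\cdots t_n))\prod_jt_j!$, with $B_+$ grafting on a new root and $v$ the number of vertices. $E$ is the character of $\mathcal H$ with $E(t)=1/t!$, and $L=E\circ S$ its $\star$-inverse. $C_n$ is the corolla with $n$ edges ($C_0=\bullet$). $A_\sigma(s)=\sigma(s)s$ for forests $s=t_1\cdots t_m$, $\sigma(s)=\prod|\mathrm{Aut}(t_j)|$. *)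

theory Defs
  imports Main "HOL-Computational_Algebra.Formal_Power_Series"
begin

(* Rooted trees are represented by planar representatives; all notions below are
   invariant under reordering children, so they descend to isomorphism classes. *)
datatype ptree = PNode "ptree list"

(* A rooted tree together with a marking of its edges (edge to each child marked or not).
   Subsets F of the edge set of t correspond bijectively to subforests of t
   (F = {} is the subforest \<bullet>; the components of F are the subtrees). *)
datatype mtree = MNode "(bool \<times> mtree) list"

fun nverts :: "ptree \<Rightarrow> nat" where
  "nverts (PNode ts) = Suc (sum_list (map nverts ts))"

definition nedges :: "ptree \<Rightarrow> nat" where
  "nedges t = nverts t - 1"

fun tfact :: "ptree \<Rightarrow> nat" where
  "tfact (PNode ts) = nverts (PNode ts) * prod_list (map tfact ts)"

fun markings :: "ptree \<Rightarrow> mtree list" where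
  "markings (PNode ts) =
     map MNode (product_lists (map (\<lambda>t. concat (map (\<lambda>b. map (\<lambda>m. (b, m)) (markings t)) [False, True])) ts))"

fun nmarked :: "mtree \<Rightarrow> nat" where
  "nmarked (MNode cs) = sum_list (map (\<lambda>bc. (if fst bc then 1 else 0) + nmarked (snd bc)) cs)"

definition hasmark :: "mtree \<Rightarrow> bool" where
  "hasmark m = (case m of MNode cs \<Rightarrow> list_ex fst cs)"

(* the component of marked edges containing the root *)
fun comp :: "mtree \<Rightarrow> ptree" where
  "comp (MNode cs) = PNode (concat (map (\<lambda>bc. if fst bc then [comp (snd bc)] else []) cs))"

(* components (with >= 1 edge) not containing the root *)
fun rest :: "mtree \<Rightarrow> ptree list" where
  "rest (MNode cs) = concat (map (\<lambda>bc. if fst bc then rest (snd bc)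
       else (if hasmark (snd bc) then [comp (snd bc)] else []) @ rest (snd bc)) cs)"

(* the subforest s determined by the marking: list of its components (empty list = \<bullet>) *)
definition forest :: "mtree \<Rightarrow> ptree list" where
  "forest m = (if hasmark m then [comp m] else []) @ rest m"

(* children of the contracted tree t/s *)
fun contr :: "mtree \<Rightarrow> ptree list" where
  "contr (MNode cs) = concat (map (\<lambda>bc. if fst bc then contr (snd bc) else [PNode (contr (snd bc))]) cs)"

definition quot :: "mtree \<Rightarrow> ptree" where
  "quot m = PNode (contr m)"

definition Echar :: "ptree \<Rightarrow> 'a::field_char_0" where
  "Echar t = 1 / of_nat (tfact t)"

(* L = E \<circ> S, computed as the \<star>-inverse of E:
   for t with at least one edge,  \<Sum>_{s subforest of t} L(s) E(t/s) = 0,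
   i.e. L(t) = - \<Sum>_{s \<noteq> t} L(s) E(t/s), with L multiplicative on forests, L(\<bullet>) = 1.
   Lf k is the recursion with fuel k; it is exact on trees with at most k edges. *)
fun Lf :: "nat \<Rightarrow> ptree \<Rightarrow> 'a::field_char_0" where
  "Lf 0 t = 1"
| "Lf (Suc k) t = (if nedges t = 0 then 1 else
     - sum_list (map (\<lambda>m. prod_list (map (Lf k) (forest m)) * Echar (quot m))
                    (filter (\<lambda>m. nmarked m \<noteq> nedges t) (markings t))))"

definition Lchar :: "ptree \<Rightarrow> 'a::field_char_0" where
  "Lchar t = Lf (nedges t) t"

definition corolla :: "nat \<Rightarrow> ptree" where
  "corolla n = PNode (replicate n (PNode []))"

(* vertices as paths from the root *)
fun is_vert :: "ptree \<Rightarrow> nat list \<Rightarrow> bool" where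
  "is_vert (PNode ts) [] = True"
| "is_vert (PNode ts) (i # p) = (i < length ts \<and> is_vert (ts ! i) p)"

definition verts :: "ptree \<Rightarrow> nat list set" where
  "verts t = {p. is_vert t p}"

definition aut_card :: "ptree \<Rightarrow> nat" where
  "aut_card t = card {f. bij_betw f (verts t) (verts t) \<and> f [] = []
      \<and> (\<forall>p\<in>verts t. p \<noteq> [] \<longrightarrow> f (butlast p) = butlast (f p))
      \<and> (\<forall>p. p \<notin> verts t \<longrightarrow> f p = p)}"

(* L_\<sigma> = L \<circ> A_\<sigma>^{-1} on a tree t:  L(t / \<sigma>(t)) *)
definition Lsigma :: "ptree \<Rightarrow> 'a::field_char_0" where
  "Lsigma t = Lchar t / of_nat (aut_card t)"

definition bernoulli :: "nat \<Rightarrow> 'a::field_char_0" where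
  "bernoulli n = fact n * fps_nth (fps_X / (fps_exp 1 - 1)) n"

end

theory Submission
  imports Defs "HOL-Combinatorics.Permutations"
begin

(* Bernoulli side: writing x/(e^x-1) = 1/h with h = (e^x-1)/x = sum x^n/(n+1)!, the
   coefficient identity for (x/(e^x-1)) * h = 1 gives B_0 = 1 and, for j > 0,
     B_j = - sum_{i<j} (j choose i) B_i / (j-i+1).

   Tree side: a subforest of C_j is determined by the set of its i marked edges; it is
   the single component C_i (or \<bullet> if i = 0), and contracting it leaves C_{j-i}, whose
   tree factorial is j-i+1.  Grouping the (j choose i) markings with i marked edges,
   the defining recursion of L becomes exactly the Bernoulli recursion above, so
   L(C_j) = B_j by induction (on the recursion depth of L, which bounds j).

   Finally, the automorphisms of C_n are exactly the n! permutations of its leaves,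
   which yields L_sigma(C_n) = B_n / n!. *)

section \<open>Bernoulli numbers\<close>

(* The power series (e^x - 1)/x = sum_n x^n/(n+1)!, the reciprocal of the Bernoulli series. *)
definition exp_minus_one_over_X :: "'a::field_char_0 fps" where
  "exp_minus_one_over_X = Abs_fps (\<lambda>n. 1 / fact (Suc n))"

lemma fps_exp_minus_one: "(fps_exp 1 - 1 :: 'a::field_char_0 fps) = exp_minus_one_over_X * fps_X"
proof (rule fps_ext)
  fix n show "fps_nth (fps_exp 1 - 1 :: 'a fps) n = fps_nth (exp_minus_one_over_X * fps_X) n"
    by (cases n) (simp_all add: exp_minus_one_over_X_def algebra_simps)
qed

lemma bernoulli_fps_times_inverse:
  "(fps_X / (fps_exp 1 - 1) :: 'a::field_char_0 fps) * exp_minus_one_over_X = 1"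
proof -
  have unit: "fps_nth exp_minus_one_over_X 0 \<noteq> (0::'a)"
    by (simp add: exp_minus_one_over_X_def)
  have "(fps_X / (fps_exp 1 - 1) :: 'a fps) = (1 * fps_X) / (exp_minus_one_over_X * fps_X)"
    by (simp add: fps_exp_minus_one)
  also have "\<dots> = 1 / exp_minus_one_over_X" by (rule fps_divide_cancel) simp
  also have "\<dots> = inverse exp_minus_one_over_X" using unit by (simp add: fps_divide_unit)
  finally show ?thesis using unit by (simp add: inverse_mult_eq_1)
qed

lemma bernoulli_0: "bernoulli 0 = (1::'a::field_char_0)"
proof -
  have "fps_nth ((fps_X / (fps_exp 1 - 1) :: 'a fps) * exp_minus_one_over_X) 0 = 1"
    by (simp add: bernoulli_fps_times_inverse)
  thus ?thesis by (simp add: bernoulli_def exp_minus_one_over_X_def fps_mult_nth)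
qed

lemma fact_quotient_choose:
  assumes "j \<le> n"
  shows "(fact n :: 'a::field_char_0) / (fact j * fact (Suc (n - j)))
         = of_nat (n choose j) / of_nat (Suc (n - j))"
proof -
  have "(fact n :: 'a) / (fact j * fact (Suc (n - j)))
        = fact n / (fact j * fact (n - j)) / of_nat (Suc (n - j))"
    by (simp add: field_simps del: of_nat_Suc)
  thus ?thesis by (simp only: binomial_fact[OF assms])
qed

(* The classical recursion for the Bernoulli numbers, from the coefficients of
   (x/(e^x-1)) * ((e^x-1)/x) = 1 in degree j > 0. *)
lemma bernoulli_recursion:
  assumes "j > 0"
  shows "(bernoulli j :: 'a::field_char_0) =
    - (\<Sum>i<j. of_nat (j choose i) * bernoulli i / of_nat (Suc (j - i)))"
proof -
  have "fps_nth ((fps_X / (fps_exp 1 - 1) :: 'a fps) * exp_minus_one_over_X) j = 0"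
    using assms by (simp add: bernoulli_fps_times_inverse)
  hence "(\<Sum>i\<le>j. bernoulli i / fact i * (1 / fact (Suc (j - i)))) = (0::'a)"
    by (simp add: fps_mult_nth atLeast0AtMost bernoulli_def exp_minus_one_over_X_def)
  hence "fact j * (\<Sum>i\<le>j. bernoulli i / fact i * (1 / fact (Suc (j - i)))) = (0::'a)"
    by simp
  hence "(\<Sum>i\<le>j. fact j * (bernoulli i / fact i * (1 / fact (Suc (j - i))))) = (0::'a)"
    by (simp only: sum_distrib_left)
  moreover have "fact j * (bernoulli i / fact i * (1 / fact (Suc (j - i))))
      = of_nat (j choose i) * bernoulli i / (of_nat (Suc (j - i)) :: 'a)" if "i \<le> j" for i
  proof -
    have "fact j * (bernoulli i / fact i * (1 / fact (Suc (j - i))))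
          = bernoulli i * ((fact j :: 'a) / (fact i * fact (Suc (j - i))))"
      by (simp add: field_simps del: fact_Suc)
    also have "\<dots> = bernoulli i * (of_nat (j choose i) / of_nat (Suc (j - i)))"
      by (simp only: fact_quotient_choose[OF that])
    finally show ?thesis by simp
  qed
  ultimately have "(\<Sum>i\<le>j. of_nat (j choose i) * bernoulli i / of_nat (Suc (j - i))) = (0::'a)"
    by simp
  thus ?thesis by (simp add: lessThan_Suc_atMost[symmetric] eq_neg_iff_add_eq_0 add.commute)
qed

section \<open>Counting markings by the number of marked edges\<close>

(* Pascal's rule, in the form of a sum over the marked-edge count. *)
lemma binomial_sum_Suc:
  "(\<Sum>j\<le>Suc n. of_nat (Suc n choose j) * (G j :: 'a::comm_semiring_1))
   = (\<Sum>j\<le>n. of_nat (n choose j) * G j) + (\<Sum>j\<le>n. of_nat (n choose j) * G (Suc j))"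
proof -
  have shift: "(\<Sum>j\<le>n. of_nat (n choose j) * G j)
               = G 0 + (\<Sum>j\<le>n. of_nat (n choose Suc j) * G (Suc j))"
  proof -
    have "(\<Sum>j\<le>n. of_nat (n choose j) * G j)
          = G 0 + (\<Sum>j<n. of_nat (n choose Suc j) * G (Suc j))"
      by (subst sum.atMost_shift) simp
    also have "(\<Sum>j<n. of_nat (n choose Suc j) * G (Suc j))
               = (\<Sum>j\<le>n. of_nat (n choose Suc j) * G (Suc j))"
      by (simp add: lessThan_Suc_atMost[symmetric] binomial_eq_0)
    finally show ?thesis .
  qed
  show ?thesis
    by (simp add: sum.atMost_Suc_shift shift sum.distrib distrib_right add_ac del: sum.atMost_Suc)
qed

lemma sum_markings_by_count:
  "sum_list (map (\<lambda>cs. G (length (filter fst cs))) (product_lists (replicate n [(False, l), (True, l)])))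
   = (\<Sum>i\<le>n. of_nat (n choose i) * (G i :: 'a::comm_semiring_1))"
proof (induction n arbitrary: G)
  case 0 thus ?case by simp
next
  case (Suc n)
  have "sum_list (map (\<lambda>cs. G (length (filter fst cs)))
          (product_lists (replicate (Suc n) [(False, l), (True, l)])))
     = sum_list (map (\<lambda>cs. G (length (filter fst cs))) (product_lists (replicate n [(False, l), (True, l)])))
     + sum_list (map (\<lambda>cs. (G \<circ> Suc) (length (filter fst cs))) (product_lists (replicate n [(False, l), (True, l)])))"
    by (simp add: comp_def)
  also have "\<dots> = (\<Sum>i\<le>Suc n. of_nat (Suc n choose i) * G i)"
    unfolding binomial_sum_Suc Suc.IH[of G] Suc.IH[of "G \<circ> Suc"] by (simp add: comp_def)
  finally show ?case .
qed

section \<open>The corolla\<close>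

lemma nverts_corolla: "nverts (corolla m) = Suc m"
  by (simp add: corolla_def sum_list_replicate)

lemma nedges_corolla: "nedges (corolla m) = m"
  by (simp add: nedges_def nverts_corolla)

lemma Echar_corolla: "Echar (corolla m) = 1 / (of_nat (Suc m) :: 'a::field_char_0)"
proof -
  have "tfact (corolla m) = nverts (corolla m) * prod_list (map tfact (replicate m (PNode [])))"
    unfolding corolla_def by (simp only: tfact.simps)
  thus ?thesis by (simp add: Echar_def nverts_corolla)
qed

lemma markings_corolla:
  "markings (corolla m) = map MNode (product_lists (replicate m [(False, MNode []), (True, MNode [])]))"
  by (simp add: corolla_def map_replicate)

lemma in_product_lists_replicate:
  "cs \<in> set (product_lists (replicate n xs)) \<Longrightarrow> x \<in> set cs \<Longrightarrow> x \<in> set xs"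
  by (induction n arbitrary: cs) auto

lemma Lf_corolla_0: "Lf k (corolla 0) = 1"
  by (cases k) (simp_all add: nedges_corolla)

(* Throughout, cs is the list of children of a marked corolla: every child is a leaf,
   and i = length (filter fst cs) edges are marked. *)

lemma nmarked_leaves:
  "\<forall>x\<in>set cs. snd x = MNode [] \<Longrightarrow> nmarked (MNode cs) = length (filter fst cs)"
  by (induction cs) auto

lemma hasmark_leaves: "hasmark (MNode cs) = (filter fst cs \<noteq> [])"
  by (induction cs) (auto simp: hasmark_def)

lemma comp_leaves:
  "\<forall>x\<in>set cs. snd x = MNode [] \<Longrightarrow> comp (MNode cs) = corolla (length (filter fst cs))"
  by (induction cs) (auto simp: corolla_def)

lemma rest_Nil: "rest (MNode []) = []"
  by (simp only: rest.simps list.map concat.simps)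

(* No component avoids the root.  (The simplifier loops on the equations of rest,
   so they are only used in unfolded form.) *)
lemma rest_leaves: "\<forall>x\<in>set cs. snd x = MNode [] \<Longrightarrow> rest (MNode cs) = []"
proof (induction cs)
  case Nil show ?case by (rule rest_Nil)
next
  case (Cons c cs)
  have leaf: "snd c = MNode []" using Cons.prems by simp
  have "rest (MNode cs) = []" using Cons.prems by (intro Cons.IH) simp
  moreover have "rest (MNode (c # cs)) = (if fst c then rest (snd c)
       else (if hasmark (snd c) then [comp (snd c)] else []) @ rest (snd c)) @ rest (MNode cs)"
    by (simp only: rest.simps list.map concat.simps)
  ultimately show ?case unfolding leaf by (simp add: rest_Nil hasmark_def del: rest.simps)
qed

lemma contr_leaves:
  "\<forall>x\<in>set cs. snd x = MNode [] \<Longrightarrow>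
   contr (MNode cs) = replicate (length (filter (\<lambda>x. \<not> fst x) cs)) (PNode [])"
  by (induction cs) auto

lemma forest_leaves:
  assumes "\<forall>x\<in>set cs. snd x = MNode []"
  shows "forest (MNode cs) = (if filter fst cs = [] then [] else [corolla (length (filter fst cs))])"
  using assms by (simp add: forest_def hasmark_leaves comp_leaves rest_leaves del: rest.simps comp.simps)

lemma quot_leaves:
  assumes "\<forall>x\<in>set cs. snd x = MNode []"
  shows "quot (MNode cs) = corolla (length cs - length (filter fst cs))"
proof -
  have "length (filter (\<lambda>x. \<not> fst x) cs) = length cs - length (filter fst cs)"
    using sum_length_filter_compl[of fst cs] by simp
  thus ?thesis using assms by (simp add: quot_def contr_leaves corolla_def del: contr.simps)
qed

lemma Lf_summand_leaves:
  assumes "\<forall>x\<in>set cs. snd x = MNode []"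
  shows "prod_list (map (Lf k) (forest (MNode cs))) * Echar (quot (MNode cs))
         = Lf k (corolla (length (filter fst cs))) / (of_nat (Suc (length cs - length (filter fst cs))) :: 'a::field_char_0)"
  using assms by (simp add: forest_leaves quot_leaves Echar_corolla Lf_corolla_0)

(* Grouping the markings by the number of marked edges turns the defining recursion of
   L on C_j into a Bernoulli-type recursion. *)
lemma Lf_corolla_recursion:
  assumes "j > 0"
  shows "(Lf (Suc k) (corolla j) :: 'a::field_char_0)
         = - (\<Sum>i<j. of_nat (j choose i) * Lf k (corolla i) / of_nat (Suc (j - i)))"
proof -
  define G :: "nat \<Rightarrow> 'a" where
    "G i = (if i = j then 0 else Lf k (corolla i) / of_nat (Suc (j - i)))" for i
  define g :: "mtree \<Rightarrow> 'a" where
    "g = (\<lambda>m. if nmarked m \<noteq> j then prod_list (map (Lf k) (forest m)) * Echar (quot m) else 0)"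
  have g_G: "g (MNode cs) = G (length (filter fst cs))"
    if "cs \<in> set (product_lists (replicate j [(False, MNode []), (True, MNode [])]))" for cs
  proof -
    have leaves: "\<forall>x\<in>set cs. snd x = MNode []"
      using in_product_lists_replicate[OF that] by fastforce
    have "length cs = j" using in_set_product_lists_length[OF that] by simp
    thus ?thesis using leaves by (simp add: g_def G_def nmarked_leaves Lf_summand_leaves del: nmarked.simps)
  qed
  have "Lf (Suc k) (corolla j) = - sum_list (map g (markings (corolla j)))"
    using assms by (simp add: nedges_corolla sum_list_map_filter' g_def)
  also have "sum_list (map g (markings (corolla j))) =
      sum_list (map (\<lambda>cs. G (length (filter fst cs)))
        (product_lists (replicate j [(False, MNode []), (True, MNode [])])))"
    unfolding markings_corolla map_map by (rule arg_cong[where f=sum_list]) (simp add: g_G)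
  also have "\<dots> = (\<Sum>i\<le>j. of_nat (j choose i) * G i)" by (rule sum_markings_by_count)
  also have "\<dots> = (\<Sum>i<j. of_nat (j choose i) * Lf k (corolla i) / of_nat (Suc (j - i)))"
    by (simp add: lessThan_Suc_atMost[symmetric] G_def)
  finally show ?thesis .
qed

lemma Lf_corolla:
  "j \<le> k \<Longrightarrow> (Lf k (corolla j) :: 'a::field_char_0) = bernoulli j"
proof (induction k arbitrary: j)
  case 0 thus ?case by (simp add: bernoulli_0)
next
  case (Suc k)
  show ?case
  proof (cases "j = 0")
    case True thus ?thesis by (simp add: Lf_corolla_0 bernoulli_0)
  next
    case False
    have IH: "i < j \<Longrightarrow> (Lf k (corolla i) :: 'a) = bernoulli i" for i
      using Suc by simp
    have "(Lf (Suc k) (corolla j) :: 'a)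
          = - (\<Sum>i<j. of_nat (j choose i) * Lf k (corolla i) / of_nat (Suc (j - i)))"
      using False by (intro Lf_corolla_recursion) simp
    also have "\<dots> = - (\<Sum>i<j. of_nat (j choose i) * bernoulli i / of_nat (Suc (j - i)))"
      using IH by (intro arg_cong[where f = uminus] sum.cong) simp_all
    also have "\<dots> = bernoulli j"
      using False by (intro bernoulli_recursion[symmetric]) simp
    finally show ?thesis .
  qed
qed

section \<open>Automorphisms of the corolla\<close>

lemma verts_corolla: "verts (corolla n) = insert [] ((\<lambda>i. [i]) ` {..<n})"
proof -
  have "is_vert (corolla n) p \<longleftrightarrow> p = [] \<or> (\<exists>i<n. p = [i])" for p
  proof (cases p)
    case Nil thus ?thesis by (simp add: corolla_def)
  next
    case (Cons i q)
    thus ?thesis by (cases q) (auto simp: corolla_def)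
  qed
  thus ?thesis by (auto simp: verts_def)
qed

definition is_aut :: "ptree \<Rightarrow> (nat list \<Rightarrow> nat list) \<Rightarrow> bool" where
  "is_aut t f \<longleftrightarrow> bij_betw f (verts t) (verts t) \<and> f [] = []
      \<and> (\<forall>p\<in>verts t. p \<noteq> [] \<longrightarrow> f (butlast p) = butlast (f p))
      \<and> (\<forall>p. p \<notin> verts t \<longrightarrow> f p = p)"

definition leaf_perm :: "(nat \<Rightarrow> nat) \<Rightarrow> nat list \<Rightarrow> nat list" where
  "leaf_perm \<pi> p = (case p of [i] \<Rightarrow> [\<pi> i] | _ \<Rightarrow> p)"

lemma leaf_perm_is_aut:
  assumes perm: "\<pi> permutes {..<n}"
  shows "is_aut (corolla n) (leaf_perm \<pi>)"
proof -
  define V where "V = verts (corolla n)"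
  have V: "V = insert [] ((\<lambda>i. [i]) ` {..<n})" by (simp add: V_def verts_corolla)
  have "bij_betw (leaf_perm \<pi>) V V"
  proof (rule bij_betw_byWitness[where f' = "leaf_perm (inv \<pi>)"])
    show "\<forall>p\<in>V. leaf_perm (inv \<pi>) (leaf_perm \<pi> p) = p"
      using permutes_inverses(2)[OF perm] by (auto simp: V leaf_perm_def)
    show "\<forall>p\<in>V. leaf_perm \<pi> (leaf_perm (inv \<pi>) p) = p"
      using permutes_inverses(1)[OF perm] by (auto simp: V leaf_perm_def)
    show "leaf_perm \<pi> ` V \<subseteq> V"
      using permutes_in_image[OF perm] by (auto simp: V leaf_perm_def)
    show "leaf_perm (inv \<pi>) ` V \<subseteq> V"
      using permutes_in_image[OF permutes_inv[OF perm]] by (auto simp: V leaf_perm_def)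
  qed
  moreover have "leaf_perm \<pi> p = p" if "p \<notin> V" for p
    using that permutes_not_in[OF perm] by (auto simp: V leaf_perm_def split: list.split)
  moreover have "leaf_perm \<pi> (butlast p) = butlast (leaf_perm \<pi> p)" if "p \<in> V" "p \<noteq> []" for p
    using that by (auto simp: V leaf_perm_def)
  ultimately show ?thesis by (simp add: is_aut_def V_def leaf_perm_def)
qed

lemma is_aut_corolla_leaf_perm:
  assumes aut: "is_aut (corolla n) f"
  shows "\<exists>\<pi>. \<pi> permutes {..<n} \<and> f = leaf_perm \<pi>"
proof -
  define leaves where "leaves = (\<lambda>i. [i]) ` {..<n}"
  have V: "verts (corolla n) = insert [] leaves" by (simp add: leaves_def verts_corolla)
  have root: "f [] = []" and outside: "\<And>p. p \<notin> insert [] leaves \<Longrightarrow> f p = p"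
    using aut by (simp_all add: is_aut_def V)
  have "bij_betw f (insert [] leaves) (insert [] leaves)" using aut by (simp add: is_aut_def V)
  hence "bij_betw f (insert [] leaves - {[]}) (insert [] leaves - {[]})"
    by (rule bij_betw_DiffI) (simp_all add: root bij_betw_def)
  hence f_leaves: "bij_betw f leaves leaves" by (simp add: leaves_def image_iff)
  define \<pi> where "\<pi> i = (if i < n then hd (f [i]) else i)" for i
  have f_leaf: "f [i] = [\<pi> i]" if "i < n" for i
  proof -
    have "f [i] \<in> leaves" using bij_betw_apply[OF f_leaves] that by (simp add: leaves_def)
    thus ?thesis using that by (auto simp: leaves_def \<pi>_def)
  qed
  have single: "bij_betw (\<lambda>i. [i]) {..<n} leaves" by (simp add: bij_betw_def inj_on_def leaves_def)
  have head: "bij_betw hd leaves {..<n}" by (auto simp: bij_betw_def inj_on_def leaves_def image_iff)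
  have "bij_betw (hd \<circ> f \<circ> (\<lambda>i. [i])) {..<n} {..<n}"
    by (rule bij_betw_trans[OF single bij_betw_trans[OF f_leaves head]])
  hence "bij_betw \<pi> {..<n} {..<n}" by (rule bij_betw_cong[THEN iffD1, rotated]) (simp add: \<pi>_def)
  hence perm: "\<pi> permutes {..<n}" by (rule bij_imp_permutes) (simp add: \<pi>_def)
  have "f p = leaf_perm \<pi> p" for p
  proof (cases "p \<in> insert [] leaves")
    case True thus ?thesis using root f_leaf by (auto simp: leaves_def leaf_perm_def)
  next
    case False thus ?thesis using outside by (auto simp: leaves_def leaf_perm_def \<pi>_def split: list.split)
  qed
  thus ?thesis using perm by blast
qed

lemma aut_card_corolla: "aut_card (corolla n) = fact n"
proof -
  have inj: "inj_on leaf_perm {\<pi>. \<pi> permutes {..<n}}"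
  proof (rule inj_onI)
    fix \<pi> \<sigma> assume "leaf_perm \<pi> = leaf_perm \<sigma>"
    hence "leaf_perm \<pi> [i] = leaf_perm \<sigma> [i]" for i by simp
    thus "\<pi> = \<sigma>" by (auto simp: leaf_perm_def)
  qed
  have "{f. is_aut (corolla n) f} = leaf_perm ` {\<pi>. \<pi> permutes {..<n}}"
    using leaf_perm_is_aut is_aut_corolla_leaf_perm by blast
  hence "aut_card (corolla n) = card (leaf_perm ` {\<pi>. \<pi> permutes {..<n}})"
    by (simp add: aut_card_def is_aut_def[abs_def])
  also have "\<dots> = card {\<pi>. \<pi> permutes {..<n}}" by (rule card_image[OF inj])
  also have "\<dots> = fact n" by (simp add: card_permutations)
  finally show ?thesis .
qed

theorem mainTheorem12:
  fixes n :: nat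
  shows "(Lchar (corolla n) :: 'a::field_char_0) = bernoulli n
         \<and> (Lsigma (corolla n) :: 'a) = bernoulli n / fact n"
proof
  show L: "(Lchar (corolla n) :: 'a) = bernoulli n"
    unfolding Lchar_def nedges_corolla by (rule Lf_corolla) simp
  show "(Lsigma (corolla n) :: 'a) = bernoulli n / fact n"
    unfolding Lsigma_def L aut_card_corolla by simp
qed

end
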